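(* Let $A$ be an abelian topological group and $D\le A$ a dense subgroup, and let $r\colon\hat A\to\hat D$ be the restriction map $\chi\mapsto\chi|_D$. Then: (a) $r$ is a bijective continuous homomorphism (every continuous character of $D$ extends uniquely to a continuous character of $A$); (b) if $\alpha_D$ is continuous, then a subset of $\hat A$ is compact if and only if its image under $r$ is compact in $\hat D$, and moreover $\alpha_A$ is continuous; (c) if $D$ is locally quasi-convex, then so is $A$.
   Context: $\mathbb{T}=\mathbb{R}/\mathbb{Z}$, $\Lambda_1$ is the image of $[-\tfrac14,\tfrac14]$ in $\mathbb{T}$. For an abelian topological group $A$, $\hat A$ is the group of continuous homomorphisms $A\to\mathbb{T}$ with the compact-open topology and $\alpha_A\colon A\to\hat{\hat A}$, $\alpha_A(a)(\chi)=\chi(a)$. For $S\subseteq A$, $S^\vartriangleright=\{\chi\in\hat A\mid\chi(S)\subseteq\Lambda_1\}$; for $\Phi\subseteq\hat A$, $\Phi^\vartriangleleft=\{a\in A\mid\chi(a)\in\Lambda_1\ \forall\chi\in\Phi\}$. $A$ is locally quasi-convex if $\{U^{\vartriangleright\vartriangleleft}\mid U \text{ a neighborhood of } 0\}$ is a base of neighborhoods of $0$ in $A$. *)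

theory Defs
  imports "HOL-Algebra.Group" "HOL-Analysis.Analysis"
begin

text \<open>The circle group T = R/Z, modelled (via t \<mapsto> exp(2 pi i t)) as the unit circle in C.\<close>

definition circle_group :: "complex monoid" where
  "circle_group = \<lparr>carrier = sphere 0 1, monoid.mult = (*), monoid.one = 1\<rparr>"

definition circle_top :: "complex topology" where
  "circle_top = top_of_set (sphere 0 1)"

definition Lambda1 :: "complex set" where
  "Lambda1 = (\<lambda>t. cis (2 * pi * t)) ` {-1/4..1/4}"

definition ab_top_group :: "'a monoid \<Rightarrow> 'a topology \<Rightarrow> bool" where
  "ab_top_group G T \<longleftrightarrow> comm_group G \<and> topspace T = carrier G
     \<and> continuous_map (prod_topology T T) T (\<lambda>p. fst p \<otimes>\<^bsub>G\<^esub> snd p)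
     \<and> continuous_map T T (\<lambda>x. inv\<^bsub>G\<^esub> x)"

definition characters :: "'a monoid \<Rightarrow> 'a topology \<Rightarrow> ('a \<Rightarrow> complex) set" where
  "characters G T = {ch. ch \<in> hom G circle_group \<and> continuous_map T circle_top ch
                         \<and> ch \<in> extensional (carrier G)}"

definition dual_group :: "'a monoid \<Rightarrow> 'a topology \<Rightarrow> ('a \<Rightarrow> complex) monoid" where
  "dual_group G T = \<lparr>carrier = characters G T,
      monoid.mult = (\<lambda>ch ps. \<lambda>x\<in>carrier G. ch x * ps x),
      monoid.one = (\<lambda>x\<in>carrier G. 1)\<rparr>"

definition dual_top :: "'a monoid \<Rightarrow> 'a topology \<Rightarrow> ('a \<Rightarrow> complex) topology" where
  "dual_top G T = topology_generated_by
     {{ch \<in> characters G T. ch ` K \<subseteq> U} | K U. compactin T K \<and> openin circle_top U}"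

definition bidual_top :: "'a monoid \<Rightarrow> 'a topology \<Rightarrow> (('a \<Rightarrow> complex) \<Rightarrow> complex) topology" where
  "bidual_top G T = dual_top (dual_group G T) (dual_top G T)"

definition eval_map :: "'a monoid \<Rightarrow> 'a topology \<Rightarrow> 'a \<Rightarrow> (('a \<Rightarrow> complex) \<Rightarrow> complex)" where
  "eval_map G T = (\<lambda>a. \<lambda>ch\<in>characters G T. ch a)"

definition polar :: "'a monoid \<Rightarrow> 'a topology \<Rightarrow> 'a set \<Rightarrow> ('a \<Rightarrow> complex) set" where
  "polar G T S = {ch \<in> characters G T. ch ` S \<subseteq> Lambda1}"

definition prepolar :: "'a monoid \<Rightarrow> 'a topology \<Rightarrow> ('a \<Rightarrow> complex) set \<Rightarrow> 'a set" where
  "prepolar G T \<Phi> = {a \<in> carrier G. \<forall>ch\<in>\<Phi>. ch a \<in> Lambda1}"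

definition nhd0 :: "'a monoid \<Rightarrow> 'a topology \<Rightarrow> 'a set \<Rightarrow> bool" where
  "nhd0 G T N \<longleftrightarrow> N \<subseteq> topspace T \<and> (\<exists>V. openin T V \<and> \<one>\<^bsub>G\<^esub> \<in> V \<and> V \<subseteq> N)"

definition locally_quasi_convex :: "'a monoid \<Rightarrow> 'a topology \<Rightarrow> bool" where
  "locally_quasi_convex G T \<longleftrightarrow>
     (\<forall>U. nhd0 G T U \<longrightarrow> nhd0 G T (prepolar G T (polar G T U))) \<and>
     (\<forall>W. nhd0 G T W \<longrightarrow> (\<exists>U. nhd0 G T U \<and> prepolar G T (polar G T U) \<subseteq> W))"

end

theory Submission
  imports Defs
begin

(*
  A continuous character psi of the dense subgroup D is uniformly continuous, so along the
  trace on D of the neighbourhood filter of any point x its values form a Cauchy net in the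
  compact circle; the limits define the unique continuous extension of psi, hence restriction
  is a bijection of duals.

  If alpha_D is continuous, every compact set of characters of D is equicontinuous, and by
  density so is its preimage under restriction. On an equicontinuous set, closeness at finitely
  many points of D forces closeness uniformly on a compact set, so the inverse of restriction is
  continuous there and compactness lifts. Continuity of alpha_A amounts to equicontinuity of the
  compact subsets of the dual of A.

  For local quasi-convexity, the extension of a character of D mapping V meet D into Lambda_1
  maps V into Lambda_1 (Lambda_1 is closed). If chi and chi^2 both send x and n into Lambda_1,
  then chi sends x + n into Lambda_1; so a point of a prepolar in A can be moved by a small n
  into D, where the prepolar of D is small.
*)

section \<open>The circle and the compact-open topology\<close>

lemma topspace_circle_top [simp]: "topspace circle_top = sphere 0 1"
  by (simp add: circle_top_def)

lemma continuous_map_circle_top_iff: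
  "continuous_map X circle_top f \<longleftrightarrow>
     continuous_map X euclidean f \<and> f \<in> topspace X \<rightarrow> sphere 0 1"
  by (auto simp: circle_top_def continuous_map_in_subtopology)

lemma continuous_map_circle_top_metric:
  "continuous_map X circle_top f \<longleftrightarrow> f \<in> topspace X \<rightarrow> sphere 0 1 \<and>
     (\<forall>x\<in>topspace X. \<forall>e>0. \<exists>U. openin X U \<and> x \<in> U \<and> (\<forall>y\<in>U. dist (f y) (f x) < e))"
  unfolding continuous_map_circle_top_iff
  using Met_TC.continuous_map_to_metric[of X f] by (auto simp: dist_commute)

lemma Lambda1_eq: "Lambda1 = {z \<in> sphere 0 1. 0 \<le> Re z}"
proof safe
  fix z assume "z \<in> Lambda1"
  then obtain t where t: "-1/4 \<le> t" "t \<le> 1/4" "z = cis (2 * pi * t)"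
    unfolding Lambda1_def by auto
  show "z \<in> sphere 0 1" using t by simp
  have "2 * pi * (-1/4) \<le> 2 * pi * t" "2 * pi * t \<le> 2 * pi * (1/4)"
    using t pi_gt_zero by (intro mult_left_mono; simp)+
  then have "-(pi/2) \<le> 2 * pi * t" "2 * pi * t \<le> pi/2" by simp_all
  then show "0 \<le> Re z" using t by (simp add: cos_ge_zero)
next
  fix z :: complex assume z: "z \<in> sphere 0 1" "0 \<le> Re z"
  have z_eq: "z = cis (Arg z)" using rcis_cmod_Arg[of z] z by (simp add: rcis_def)
  have "0 \<le> cos (Arg z)" using z arg_cong[OF z_eq, of Re] by simp
  moreover have "\<bar>Arg z\<bar> \<le> pi" using Arg_bounded[of z] by auto
  ultimately have "\<bar>Arg z\<bar> \<le> pi/2"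
    using cos_mono_le_eq[of "pi/2" "\<bar>Arg z\<bar>"] by simp
  then have "Arg z / (2 * pi) \<in> {-1/4..1/4}" by (auto simp: divide_simps)
  moreover have "z = cis (2 * pi * (Arg z / (2 * pi)))" using z_eq by simp
  ultimately show "z \<in> Lambda1" unfolding Lambda1_def by blast
qed

lemma closedin_Lambda1: "closedin circle_top Lambda1"
proof -
  have "closedin (top_of_set (sphere 0 1)) (sphere 0 1 \<inter> {z. 0 \<le> Re z})"
    by (rule closedin_closed_Int) (simp add: closed_halfspace_Re_ge)
  moreover have "sphere 0 1 \<inter> {z. 0 \<le> Re z} = Lambda1" by (auto simp: Lambda1_eq)
  ultimately show ?thesis unfolding circle_top_def by simp
qed

text \<open>In additive notation: if \<open>t, 2t, s, 2s \<in> \<Lambda>\<^sub>1\<close> then \<open>t + s \<in> \<Lambda>\<^sub>1\<close>.\<close>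
lemma Re_mult_nonneg:
  fixes z w :: complex
  assumes "0 \<le> Re z" "0 \<le> Re (z * z)" "0 \<le> Re w" "0 \<le> Re (w * w)"
  shows "0 \<le> Re (z * w)"
proof -
  have "(Im z)\<^sup>2 \<le> (Re z)\<^sup>2" "(Im w)\<^sup>2 \<le> (Re w)\<^sup>2"
    using assms(2,4) by (simp_all add: power2_eq_square)
  then have bounds: "\<bar>Im z\<bar> \<le> Re z" "\<bar>Im w\<bar> \<le> Re w"
    using assms(1,3) abs_le_square_iff[of "Im z" "Re z"] abs_le_square_iff[of "Im w" "Re w"]
    by simp_all
  have "Im z * Im w \<le> \<bar>Im z\<bar> * \<bar>Im w\<bar>" by (simp flip: abs_mult)
  also have "\<dots> \<le> Re z * Re w" using bounds by (intro mult_mono) auto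
  finally show ?thesis by simp
qed

lemma norm_mult_diff_le:
  fixes a b c d :: complex
  assumes "norm b = 1" "norm c = 1"
  shows "norm (a * b - c * d) \<le> norm (a - c) + norm (b - d)"
proof -
  have "a * b - c * d = (a - c) * b + c * (b - d)" by (simp add: algebra_simps)
  then have "norm (a * b - c * d) \<le> norm ((a - c) * b) + norm (c * (b - d))"
    by (metis norm_triangle_ineq)
  also have "\<dots> = norm (a - c) + norm (b - d)" using assms by (simp add: norm_mult)
  finally show ?thesis .
qed

lemma compactin_circle_top_uniform_nbhd:
  assumes "compactin circle_top K" "openin circle_top U" "K \<subseteq> U"
  obtains e where "e > 0" "\<And>z w. z \<in> K \<Longrightarrow> w \<in> sphere 0 1 \<Longrightarrow> dist w z < e \<Longrightarrow> w \<in> U"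
proof -
  obtain U' where U': "open U'" "U = U' \<inter> sphere 0 1"
    using assms(2) by (auto simp: circle_top_def openin_subtopology)
  have "compact K" using assms(1) by (simp add: circle_top_def compactin_subtopology)
  moreover have "K \<subseteq> U'" using assms(3) U' by blast
  ultimately obtain e where e: "e > 0" "(\<Union>z\<in>K. ball z e) \<subseteq> U'"
    using compact_subset_open_imp_ball_epsilon_subset U'(1) by metis
  show thesis
  proof (rule that[OF e(1)])
    fix z w assume "z \<in> K" "w \<in> sphere 0 1" "dist w z < e"
    then have "w \<in> ball z e" by (simp add: dist_commute)
    then show "w \<in> U" using e(2) U'(2) \<open>z \<in> K\<close> \<open>w \<in> sphere 0 1\<close> by blast
  qed
qed

lemma continuous_map_prod_nbhds:
  assumes "continuous_map (prod_topology X Y) Z f" "openin Z V"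
    and "a \<in> topspace X" "b \<in> topspace Y" "f (a, b) \<in> V"
  obtains U1 U2 where "openin X U1" "openin Y U2" "a \<in> U1" "b \<in> U2"
    "\<And>x y. x \<in> U1 \<Longrightarrow> y \<in> U2 \<Longrightarrow> f (x, y) \<in> V"
proof -
  define M where "M = {p \<in> topspace (prod_topology X Y). f p \<in> V}"
  have "openin (prod_topology X Y) M"
    unfolding M_def using openin_continuous_map_preimage[OF assms(1,2)] .
  moreover have "(a, b) \<in> M" unfolding M_def using assms(3-5) by simp
  ultimately have "\<exists>U1 U2. openin X U1 \<and> openin Y U2 \<and> a \<in> U1 \<and> b \<in> U2 \<and> U1 \<times> U2 \<subseteq> M"
    by (rule openin_prod_topology_alt[THEN iffD1, rule_format])
  then obtain U1 U2 where "openin X U1" "openin Y U2" "a \<in> U1" "b \<in> U2" "U1 \<times> U2 \<subseteq> M"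
    by blast
  then show thesis by (intro that[of U1 U2]) (auto simp: M_def)
qed

lemma dense_openin_Int_subset_closedin:
  assumes "X closure_of D = topspace X" "openin X U" "closedin X F" "U \<inter> D \<subseteq> F"
  shows "U \<subseteq> F"
proof -
  have "U \<subseteq> U \<inter> X closure_of D" using assms(1) openin_subset[OF assms(2)] by auto
  also have "\<dots> \<subseteq> X closure_of (U \<inter> D)" by (rule openin_Int_closure_of_subset[OF assms(2)])
  also have "\<dots> \<subseteq> F" by (rule closure_of_minimal[OF assms(4,3)])
  finally show ?thesis .
qed

lemma topspace_dual_top [simp]: "topspace (dual_top G T) = characters G T"
proof -
  have "{ch \<in> characters G T. ch ` {} \<subseteq> sphere 0 1} \<in>
      {{ch \<in> characters G T. ch ` K \<subseteq> U} | K U. compactin T K \<and> openin circle_top U}"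
    using openin_topspace[of circle_top] by (intro CollectI exI[of _ "{}"] exI[of _ "sphere 0 1"]) simp
  then show ?thesis
    unfolding dual_top_def topology_generated_by_topspace by auto
qed

lemma openin_dual_top_basic:
  assumes "compactin T K" "openin circle_top U"
  shows "openin (dual_top G T) {ch \<in> characters G T. ch ` K \<subseteq> U}"
  unfolding dual_top_def by (rule topology_generated_by_Basis) (use assms in blast)

lemma openin_dual_top_finite_points:
  assumes "finite F" "F \<subseteq> topspace T"
  shows "openin (dual_top G T) {chi \<in> characters G T. \<forall>x\<in>F. dist (chi x) (z x) < e}"
proof -
  have "openin (dual_top G T) {chi \<in> characters G T. chi ` {x} \<subseteq> ball (z x) e \<inter> sphere 0 1}"
    if "x \<in> F" for x
  proof (rule openin_dual_top_basic)
    show "compactin T {x}" using that assms(2) by auto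
    show "openin circle_top (ball (z x) e \<inter> sphere 0 1)"
      unfolding circle_top_def by (metis Int_commute open_ball openin_open_Int)
  qed
  then have "openin (dual_top G T)
      ((\<Inter>x\<in>F. {chi \<in> characters G T. chi ` {x} \<subseteq> ball (z x) e \<inter> sphere 0 1}) \<inter> topspace (dual_top G T))"
    by (intro openin_INT[OF assms(1)])
  moreover have "(\<Inter>x\<in>F. {chi \<in> characters G T. chi ` {x} \<subseteq> ball (z x) e \<inter> sphere 0 1}) \<inter> topspace (dual_top G T)
      = {chi \<in> characters G T. \<forall>x\<in>F. dist (chi x) (z x) < e}"
    using assms(2) by (auto simp: characters_def continuous_map_circle_top_iff dist_commute)
  ultimately show ?thesis by simp
qed

lemma eval_map_image:
  "K \<subseteq> characters G T \<Longrightarrow> eval_map G T x ` K = (\<lambda>chi. chi x) ` K"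
  by (force simp: eval_map_def)

lemma continuous_map_into_dual_top:
  assumes "f \<in> topspace X \<rightarrow> characters G T"
    and "\<And>K U. compactin T K \<Longrightarrow> openin circle_top U \<Longrightarrow> openin X {x \<in> topspace X. f x ` K \<subseteq> U}"
  shows "continuous_map X (dual_top G T) f"
  unfolding dual_top_def
proof (rule continuous_on_generated_topo)
  show "f ` topspace X \<subseteq> \<Union>{{ch \<in> characters G T. ch ` K \<subseteq> U} | K U. compactin T K \<and> openin circle_top U}"
    using assms(1) topspace_dual_top[of G T] by (auto simp: dual_top_def)
  fix B assume "B \<in> {{ch \<in> characters G T. ch ` K \<subseteq> U} | K U. compactin T K \<and> openin circle_top U}"
  then obtain K U where "B = {ch \<in> characters G T. ch ` K \<subseteq> U}" "compactin T K" "openin circle_top U"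
    by blast
  moreover from this have "f -` B \<inter> topspace X = {x \<in> topspace X. f x ` K \<subseteq> U}"
    using assms(1) by auto
  ultimately show "openin X (f -` B \<inter> topspace X)" using assms(2) by simp
qed

section \<open>Topological abelian groups and their characters\<close>

lemma (in group) inv_mult_left_translates:
  "x \<in> carrier G \<Longrightarrow> a \<in> carrier G \<Longrightarrow> b \<in> carrier G \<Longrightarrow> inv (x \<otimes> a) \<otimes> (x \<otimes> b) = inv a \<otimes> b"
  by (simp add: inv_mult_group m_assoc[symmetric]) (simp add: m_assoc)

locale top_comm_group =
  fixes G :: "'a monoid" (structure) and T :: "'a topology"
  assumes ab_top_group: "ab_top_group G T"
begin

sublocale comm_group G
  using ab_top_group by (simp add: ab_top_group_def)

lemma topspace_eq [simp]: "topspace T = carrier G"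
  using ab_top_group by (simp add: ab_top_group_def)

lemma continuous_map_mult: "continuous_map (prod_topology T T) T (\<lambda>p. fst p \<otimes> snd p)"
  using ab_top_group by (simp add: ab_top_group_def)

lemma continuous_map_inv: "continuous_map T T (\<lambda>x. inv x)"
  using ab_top_group by (simp add: ab_top_group_def)

lemma continuous_map_left_mult:
  assumes "a \<in> carrier G"
  shows "continuous_map T T (\<lambda>y. a \<otimes> y)"
proof -
  have "continuous_map T (prod_topology T T) (\<lambda>y. (a, y))"
    using assms by (intro continuous_map_pairedI) simp_all
  from continuous_map_compose[OF this continuous_map_mult] show ?thesis by (simp add: o_def)
qed

lemma openin_left_mult_preimage:
  assumes "a \<in> carrier G" "openin T V"
  shows "openin T {y \<in> carrier G. a \<otimes> y \<in> V}"
  using openin_continuous_map_preimage[OF continuous_map_left_mult[OF assms(1)] assms(2)] by simp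

lemma nbhd_of_one_split:
  assumes "openin T V" "\<one> \<in> V"
  obtains W where "openin T W" "\<one> \<in> W" "W \<subseteq> V"
    "\<And>a b. a \<in> W \<Longrightarrow> b \<in> W \<Longrightarrow> a \<otimes> b \<in> V"
    "\<And>a b. a \<in> W \<Longrightarrow> b \<in> W \<Longrightarrow> inv a \<otimes> b \<in> V"
proof -
  have "continuous_map (prod_topology T T) T (\<lambda>p. inv (fst p) \<otimes> snd p)"
    using continuous_map_compose[OF continuous_map_pairedI[OF
          continuous_map_compose[OF continuous_map_fst continuous_map_inv] continuous_map_snd]
          continuous_map_mult]
    by (simp add: o_def)
  then obtain U1 U2 where U: "openin T U1" "openin T U2" "\<one> \<in> U1" "\<one> \<in> U2"
    "\<And>a b. a \<in> U1 \<Longrightarrow> b \<in> U2 \<Longrightarrow> inv a \<otimes> b \<in> V"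
    by (rule continuous_map_prod_nbhds[OF _ assms(1)]) (use assms in auto)
  obtain U3 U4 where U': "openin T U3" "openin T U4" "\<one> \<in> U3" "\<one> \<in> U4"
    "\<And>a b. a \<in> U3 \<Longrightarrow> b \<in> U4 \<Longrightarrow> a \<otimes> b \<in> V"
    by (rule continuous_map_prod_nbhds[OF continuous_map_mult assms(1)]) (use assms in auto)
  show thesis
    by (rule that[of "U1 \<inter> U2 \<inter> U3 \<inter> U4 \<inter> V"]) (use U U' assms in auto)
qed

lemma hom_circle_group_iff:
  "ch \<in> hom G circle_group \<longleftrightarrow>
     ch \<in> carrier G \<rightarrow> sphere 0 1 \<and> (\<forall>x\<in>carrier G. \<forall>y\<in>carrier G. ch (x \<otimes> y) = ch x * ch y)"
  by (simp add: hom_def circle_group_def)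

lemma hom_circle_group_in_sphere:
  "ch \<in> hom G circle_group \<Longrightarrow> x \<in> carrier G \<Longrightarrow> ch x \<in> sphere 0 1"
  by (auto simp: hom_circle_group_iff)

lemma hom_circle_group_mult:
  "ch \<in> hom G circle_group \<Longrightarrow> x \<in> carrier G \<Longrightarrow> y \<in> carrier G \<Longrightarrow> ch (x \<otimes> y) = ch x * ch y"
  by (simp add: hom_circle_group_iff)

lemma hom_circle_group_one:
  assumes "ch \<in> hom G circle_group"
  shows "ch \<one> = 1"
proof -
  have "ch \<one> * ch \<one> = ch \<one> * 1" using hom_circle_group_mult[OF assms, of \<one> \<one>] by simp
  moreover have "ch \<one> \<noteq> 0" using hom_circle_group_in_sphere[OF assms, of \<one>] by auto
  ultimately show ?thesis by (metis mult_left_cancel)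
qed

lemma hom_circle_group_shift:
  assumes "ch \<in> hom G circle_group" "x \<in> carrier G" "y \<in> carrier G"
  shows "ch y = ch x * ch (inv x \<otimes> y)"
  using hom_circle_group_mult[OF assms(1) assms(2), of "inv x \<otimes> y"] assms(2,3)
  by (simp add: m_assoc[symmetric])

lemma hom_circle_group_dist:
  assumes "ch \<in> hom G circle_group" "x \<in> carrier G" "y \<in> carrier G"
  shows "dist (ch y) (ch x) = dist (ch (inv x \<otimes> y)) 1"
proof -
  have "ch y - ch x = ch x * (ch (inv x \<otimes> y) - 1)"
    using hom_circle_group_shift[OF assms] by (simp add: algebra_simps)
  then show ?thesis
    using hom_circle_group_in_sphere[OF assms(1,2)] by (simp add: dist_norm norm_mult)
qed

lemma characters_hom: "ch \<in> characters G T \<Longrightarrow> ch \<in> hom G circle_group"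
  and characters_continuous: "ch \<in> characters G T \<Longrightarrow> continuous_map T circle_top ch"
  and characters_extensional: "ch \<in> characters G T \<Longrightarrow> ch \<in> extensional (carrier G)"
  by (simp_all add: characters_def)

lemma characters_near_one:
  assumes "ch \<in> characters G T" "e > 0"
  obtains V where "openin T V" "\<one> \<in> V" "\<And>v. v \<in> V \<Longrightarrow> dist (ch v) 1 < e"
proof -
  have "continuous_map T euclidean ch"
    using characters_continuous[OF assms(1)] by (simp add: continuous_map_circle_top_iff)
  then have "openin T {x \<in> topspace T. ch x \<in> ball 1 e}"
    by (rule openin_continuous_map_preimage) simp
  moreover have "ch \<one> = 1" using hom_circle_group_one[OF characters_hom[OF assms(1)]] .
  ultimately show thesis
    using that[of "{x \<in> topspace T. ch x \<in> ball 1 e}"] assms(2) by (auto simp: dist_commute)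
qed

lemma charactersI:
  assumes hom: "ch \<in> hom G circle_group" and "ch \<in> extensional (carrier G)"
    and near_one: "\<And>e. e > 0 \<Longrightarrow> \<exists>V. openin T V \<and> \<one> \<in> V \<and> (\<forall>v\<in>V. dist (ch v) 1 < e)"
  shows "ch \<in> characters G T"
proof -
  have "continuous_map T circle_top ch"
    unfolding continuous_map_circle_top_metric
  proof (intro conjI ballI allI impI)
    show "ch \<in> topspace T \<rightarrow> sphere 0 1" using hom_circle_group_in_sphere[OF hom] by auto
    fix x and e :: real assume x: "x \<in> topspace T" and "e > 0"
    then obtain V where V: "openin T V" "\<one> \<in> V" "\<forall>v\<in>V. dist (ch v) 1 < e"
      using near_one by blast
    show "\<exists>U. openin T U \<and> x \<in> U \<and> (\<forall>y\<in>U. dist (ch y) (ch x) < e)"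
    proof (intro exI conjI ballI)
      show "openin T {y \<in> carrier G. inv x \<otimes> y \<in> V}"
        using openin_left_mult_preimage[OF _ V(1)] x by simp
      show "x \<in> {y \<in> carrier G. inv x \<otimes> y \<in> V}" using x V(2) by simp
      fix y assume "y \<in> {y \<in> carrier G. inv x \<otimes> y \<in> V}"
      then show "dist (ch y) (ch x) < e"
        using V(3) x hom_circle_group_dist[OF hom] by simp
    qed
  qed
  then show ?thesis using assms by (simp add: characters_def)
qed

lemma characters_mult:
  assumes chi: "chi \<in> characters G T" and phi: "phi \<in> characters G T"
  shows "(\<lambda>x\<in>carrier G. chi x * phi x) \<in> characters G T"
proof (rule charactersI)
  show "(\<lambda>x\<in>carrier G. chi x * phi x) \<in> hom G circle_group"
    using hom_circle_group_in_sphere[OF characters_hom[OF chi]]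
      hom_circle_group_in_sphere[OF characters_hom[OF phi]]
      hom_circle_group_mult[OF characters_hom[OF chi]] hom_circle_group_mult[OF characters_hom[OF phi]]
    by (auto simp: hom_circle_group_iff norm_mult)
  fix e :: real assume "e > 0"
  obtain V1 where V1: "openin T V1" "\<one> \<in> V1" "\<And>v. v \<in> V1 \<Longrightarrow> dist (chi v) 1 < e/2"
    using characters_near_one[OF chi half_gt_zero[OF \<open>e > 0\<close>]] by blast
  obtain V2 where V2: "openin T V2" "\<one> \<in> V2" "\<And>v. v \<in> V2 \<Longrightarrow> dist (phi v) 1 < e/2"
    using characters_near_one[OF phi half_gt_zero[OF \<open>e > 0\<close>]] by blast
  show "\<exists>V. openin T V \<and> \<one> \<in> V \<and> (\<forall>v\<in>V. dist ((\<lambda>x\<in>carrier G. chi x * phi x) v) 1 < e)"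
  proof (intro exI conjI ballI)
    fix v assume v: "v \<in> V1 \<inter> V2"
    then have "v \<in> carrier G" using openin_subset[OF V1(1)] by auto
    then have "norm (chi v * phi v - 1 * 1) \<le> norm (chi v - 1) + norm (phi v - 1)"
      using hom_circle_group_in_sphere[OF characters_hom[OF phi]] by (intro norm_mult_diff_le) simp_all
    moreover have "dist (chi v) 1 < e/2" "dist (phi v) 1 < e/2" using V1(3) V2(3) v by auto
    ultimately show "dist ((\<lambda>x\<in>carrier G. chi x * phi x) v) 1 < e"
      using \<open>v \<in> carrier G\<close> by (simp add: dist_norm)
  qed (use V1 V2 in auto)
qed simp

lemma eval_map_in_characters:
  assumes a: "a \<in> carrier G"
  shows "eval_map G T a \<in> characters (dual_group G T) (dual_top G T)"
  unfolding characters_def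
proof (intro CollectI conjI)
  show "eval_map G T a \<in> hom (dual_group G T) circle_group"
    unfolding hom_def
  proof (intro CollectI conjI ballI)
    show "eval_map G T a \<in> carrier (dual_group G T) \<rightarrow> carrier circle_group"
      using hom_circle_group_in_sphere[OF characters_hom] a
      by (auto simp: eval_map_def dual_group_def circle_group_def)
    fix chi phi assume "chi \<in> carrier (dual_group G T)" "phi \<in> carrier (dual_group G T)"
    then show "eval_map G T a (chi \<otimes>\<^bsub>dual_group G T\<^esub> phi) = eval_map G T a chi \<otimes>\<^bsub>circle_group\<^esub> eval_map G T a phi"
      using characters_mult a by (simp add: eval_map_def dual_group_def circle_group_def)
  qed
  show "continuous_map (dual_top G T) circle_top (eval_map G T a)"
    unfolding continuous_map_def
  proof (intro conjI allI impI)
    show "eval_map G T a \<in> topspace (dual_top G T) \<rightarrow> topspace circle_top"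
      using hom_circle_group_in_sphere[OF characters_hom] a by (auto simp: eval_map_def)
    fix U assume U: "openin circle_top U"
    have "{chi \<in> topspace (dual_top G T). eval_map G T a chi \<in> U} = {chi \<in> characters G T. chi ` {a} \<subseteq> U}"
      by (auto simp: eval_map_def)
    then show "openin (dual_top G T) {chi \<in> topspace (dual_top G T). eval_map G T a chi \<in> U}"
      using openin_dual_top_basic[of T "{a}" U G] a U by simp
  qed
qed (simp add: eval_map_def dual_group_def)

definition equicontinuous :: "('a \<Rightarrow> complex) set \<Rightarrow> bool" where
  "equicontinuous K \<longleftrightarrow>
     (\<forall>e>0. \<exists>V. openin T V \<and> \<one> \<in> V \<and> (\<forall>v\<in>V. \<forall>chi\<in>K. dist (chi v) 1 \<le> e))"

text \<open>Continuity of \<open>\<alpha>\<close> at \<open>\<one>\<close>, tested on the basic neighbourhood of \<open>\<alpha> \<one>\<close> given by \<open>K\<close>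
  and an arc around \<open>1\<close>, is equicontinuity of \<open>K\<close>.\<close>
lemma equicontinuous_if_compactin:
  assumes alpha: "continuous_map T (bidual_top G T) (eval_map G T)"
    and K: "compactin (dual_top G T) K"
  shows "equicontinuous K"
  unfolding equicontinuous_def
proof (intro allI impI)
  fix e :: real assume "e > 0"
  define U where "U = ball (1::complex) e \<inter> sphere 0 1"
  have "openin circle_top U" unfolding U_def circle_top_def by (metis Int_commute open_ball openin_open_Int)
  then have "openin (bidual_top G T) {phi \<in> characters (dual_group G T) (dual_top G T). phi ` K \<subseteq> U}"
    unfolding bidual_top_def by (rule openin_dual_top_basic[OF K])
  from openin_continuous_map_preimage[OF alpha this]
  have V: "openin T {x \<in> topspace T. eval_map G T x ` K \<subseteq> U}"
    using eval_map_in_characters by (simp cong: conj_cong)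
  have K_chars: "K \<subseteq> characters G T" using compactin_subset_topspace[OF K] by simp
  note eval = eval_map_image[OF K_chars]
  have "eval_map G T \<one> ` K \<subseteq> U"
  proof (unfold eval, rule image_subsetI)
    fix chi assume "chi \<in> K"
    then have "chi \<one> = 1" using hom_circle_group_one[OF characters_hom] K_chars by blast
    then show "chi \<one> \<in> U" using \<open>e > 0\<close> by (simp add: U_def)
  qed
  then have "\<one> \<in> {x \<in> topspace T. eval_map G T x ` K \<subseteq> U}" by simp
  moreover have "\<forall>v\<in>{x \<in> topspace T. eval_map G T x ` K \<subseteq> U}. \<forall>chi\<in>K. dist (chi v) 1 \<le> e"
    by (auto simp: eval U_def dist_commute less_imp_le)
  ultimately show "\<exists>V. openin T V \<and> \<one> \<in> V \<and> (\<forall>v\<in>V. \<forall>chi\<in>K. dist (chi v) 1 \<le> e)"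
    using V by blast
qed

lemma continuous_map_eval_map:
  assumes equi: "\<And>K. compactin (dual_top G T) K \<Longrightarrow> equicontinuous K"
  shows "continuous_map T (bidual_top G T) (eval_map G T)"
  unfolding bidual_top_def
proof (rule continuous_map_into_dual_top)
  show "eval_map G T \<in> topspace T \<rightarrow> characters (dual_group G T) (dual_top G T)"
    using eval_map_in_characters by auto
  fix K U assume K: "compactin (dual_top G T) K" and U: "openin circle_top U"
  have K_chars: "K \<subseteq> characters G T" using compactin_subset_topspace[OF K] by simp
  note eval = eval_map_image[OF K_chars]
  show "openin T {x \<in> topspace T. eval_map G T x ` K \<subseteq> U}"
  proof (subst openin_subopen, intro ballI)
    fix x0 assume "x0 \<in> {x \<in> topspace T. eval_map G T x ` K \<subseteq> U}"
    then have x0: "x0 \<in> carrier G" "(\<lambda>chi. chi x0) ` K \<subseteq> U" by (auto simp: eval)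
    have "continuous_map (dual_top G T) circle_top (eval_map G T x0)"
      using eval_map_in_characters[OF x0(1)] by (simp add: characters_def)
    then have "compactin circle_top (eval_map G T x0 ` K)" by (rule image_compactin[OF K])
    then obtain e where "e > 0"
      and e: "\<And>z w. z \<in> (\<lambda>chi. chi x0) ` K \<Longrightarrow> w \<in> sphere 0 1 \<Longrightarrow> dist w z < e \<Longrightarrow> w \<in> U"
      using compactin_circle_top_uniform_nbhd U x0(2) unfolding eval by metis
    obtain V where V: "openin T V" "\<one> \<in> V" "\<forall>v\<in>V. \<forall>chi\<in>K. dist (chi v) 1 \<le> e/2"
      using equi[OF K] \<open>e > 0\<close> unfolding equicontinuous_def by (meson half_gt_zero)
    show "\<exists>W. openin T W \<and> x0 \<in> W \<and> W \<subseteq> {x \<in> topspace T. eval_map G T x ` K \<subseteq> U}"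
    proof (intro exI conjI subsetI)
      show "openin T {x \<in> carrier G. inv x0 \<otimes> x \<in> V}"
        using openin_left_mult_preimage[OF inv_closed[OF x0(1)] V(1)] .
      show "x0 \<in> {x \<in> carrier G. inv x0 \<otimes> x \<in> V}" using x0(1) V(2) by simp
      fix x assume x: "x \<in> {x \<in> carrier G. inv x0 \<otimes> x \<in> V}"
      have "chi x \<in> U" if chi: "chi \<in> K" for chi
      proof (rule e)
        have hom: "chi \<in> hom G circle_group" using chi K_chars characters_hom by blast
        show "chi x \<in> sphere 0 1" using hom_circle_group_in_sphere[OF hom] x by simp
        have "dist (chi x) (chi x0) \<le> e/2"
          using hom_circle_group_dist[OF hom x0(1)] x V(3) chi by simp
        then show "dist (chi x) (chi x0) < e" using \<open>e > 0\<close> by simp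
      qed (use chi in simp)
      then show "x \<in> {x \<in> topspace T. eval_map G T x ` K \<subseteq> U}" using x by (auto simp: eval)
    qed
  qed
qed

lemma nhd0_prepolar_polar:
  assumes "nhd0 G T U"
  shows "nhd0 G T (prepolar G T (polar G T U))"
proof -
  obtain V where V: "openin T V" "\<one> \<in> V" "V \<subseteq> U" and "U \<subseteq> carrier G"
    using assms by (auto simp: nhd0_def)
  then have "V \<subseteq> prepolar G T (polar G T U)" by (auto simp: prepolar_def polar_def)
  then show ?thesis using V(1,2) by (auto simp: nhd0_def prepolar_def)
qed

text \<open>Since \<open>V1 \<otimes> V1 \<subseteq> V\<close>, both \<open>chi\<close> and \<open>chi\<^sup>2\<close> lie in the polar of \<open>V1\<close>; evaluate them
  at \<open>x\<close> and \<open>n\<close> and apply \<open>Re_mult_nonneg\<close>.\<close>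
lemma character_mult_prepolar_in_Lambda1:
  assumes chi: "chi \<in> characters G T" "chi ` V \<subseteq> Lambda1"
    and V1: "V1 \<subseteq> carrier G" "V1 \<subseteq> V" "\<And>v. v \<in> V1 \<Longrightarrow> v \<otimes> v \<in> V"
    and x: "x \<in> prepolar G T (polar G T V1)" and n: "n \<in> V1"
  shows "chi (x \<otimes> n) \<in> Lambda1"
proof -
  have hom: "chi \<in> hom G circle_group" using characters_hom[OF chi(1)] .
  define chi2 where "chi2 = (\<lambda>y\<in>carrier G. chi y * chi y)"
  have "chi \<in> polar G T V1" using chi V1(2) by (auto simp: polar_def)
  moreover have "chi2 \<in> polar G T V1"
  proof -
    have "chi2 v \<in> Lambda1" if "v \<in> V1" for v
    proof -
      have "v \<in> carrier G" using that V1(1) by blast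
      then have "chi2 v = chi (v \<otimes> v)" using hom_circle_group_mult[OF hom] by (simp add: chi2_def)
      then show ?thesis using that V1(3) chi(2) by auto
    qed
    moreover have "chi2 \<in> characters G T" unfolding chi2_def by (rule characters_mult[OF chi(1) chi(1)])
    ultimately show ?thesis by (auto simp: polar_def)
  qed
  ultimately have "chi x \<in> Lambda1" "chi2 x \<in> Lambda1" "chi n \<in> Lambda1" "chi2 n \<in> Lambda1"
    using x n by (auto simp: prepolar_def polar_def)
  moreover have "x \<in> carrier G" "n \<in> carrier G" using x n V1(1) by (auto simp: prepolar_def)
  ultimately have "0 \<le> Re (chi x)" "0 \<le> Re (chi x * chi x)" "0 \<le> Re (chi n)" "0 \<le> Re (chi n * chi n)"
    by (simp_all add: Lambda1_eq chi2_def)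
  then have "0 \<le> Re (chi x * chi n)" by (rule Re_mult_nonneg)
  moreover have "chi (x \<otimes> n) = chi x * chi n"
    using hom_circle_group_mult[OF hom \<open>x \<in> carrier G\<close> \<open>n \<in> carrier G\<close>] .
  moreover have "chi (x \<otimes> n) \<in> sphere 0 1"
    using hom_circle_group_in_sphere[OF hom] \<open>x \<in> carrier G\<close> \<open>n \<in> carrier G\<close> by simp
  ultimately show ?thesis by (simp add: Lambda1_eq)
qed

end

section \<open>Extension of characters from a dense subgroup\<close>

locale dense_subgroup = top_comm_group +
  fixes D :: "'a set"
  assumes subgroup: "subgroup D G" and dense: "T closure_of D = topspace T"
begin

abbreviation GD :: "'a monoid" where "GD \<equiv> G\<lparr>carrier := D\<rparr>"
abbreviation TD :: "'a topology" where "TD \<equiv> subtopology T D"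

lemma subset_carrier: "D \<subseteq> carrier G"
  by (rule subgroup.subset[OF subgroup])

lemma ab_top_group_subgroup: "ab_top_group GD TD"
  unfolding ab_top_group_def
proof (intro conjI)
  show "comm_group GD"
    using group.group_comm_groupI[OF subgroup_imp_group[OF subgroup]] subset_carrier m_comm
    by (auto simp: subset_iff)
  show "topspace TD = carrier GD" using subset_carrier by auto
  have "continuous_map (prod_topology TD TD) T (\<lambda>p. fst p \<otimes> snd p)"
    unfolding subtopology_Times[symmetric] by (rule continuous_map_from_subtopology[OF continuous_map_mult])
  then show "continuous_map (prod_topology TD TD) TD (\<lambda>p. fst p \<otimes>\<^bsub>GD\<^esub> snd p)"
    using subgroup.m_closed[OF subgroup] by (auto simp: continuous_map_in_subtopology)
  have "continuous_map TD T (\<lambda>x. inv\<^bsub>GD\<^esub> x)"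
    using continuous_map_from_subtopology[OF continuous_map_inv]
    by (rule continuous_map_eq) (simp add: subgroup)
  then show "continuous_map TD TD (\<lambda>x. inv\<^bsub>GD\<^esub> x)"
    using subgroup.m_inv_closed[OF subgroup] by (auto simp: continuous_map_in_subtopology subgroup)
qed

sublocale D: top_comm_group GD TD
  by unfold_locales (rule ab_top_group_subgroup)

definition approach :: "'a \<Rightarrow> 'a filter" where
  "approach x = inf (nhdsin T x) (principal D)"

lemma eventually_approach_openin:
  assumes "openin T U" "x \<in> U"
  shows "eventually (\<lambda>d. d \<in> U \<inter> D) (approach x)"
  unfolding approach_def eventually_inf_principal
  using assms by (auto simp: eventually_nhdsin)

lemma approach_ne_bot:
  assumes "x \<in> carrier G"
  shows "approach x \<noteq> bot"
proof
  assume "approach x = bot"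
  then have "eventually (\<lambda>_. False) (approach x)" by simp
  then obtain U where U: "openin T U" "x \<in> U" "U \<inter> D = {}"
    using assms by (auto simp: approach_def eventually_inf_principal eventually_nhdsin)
  have "D \<inter> U \<noteq> {}"
    using dense U(1,2) unfolding dense_intersects_open by blast
  then show False using U(3) by blast
qed

lemma tendsto_approach:
  assumes "continuous_map (subtopology T S) euclidean f" "D \<subseteq> S" "x \<in> S" "x \<in> carrier G"
  shows "(f \<longlongrightarrow> f x) (approach x)"
proof (rule topological_tendstoI)
  fix B assume "open B" "f x \<in> B"
  have "openin (subtopology T S) {y \<in> topspace (subtopology T S). f y \<in> B}"
    using openin_continuous_map_preimage[OF assms(1)] \<open>open B\<close> by simp
  then obtain U where U: "openin T U" "{y \<in> topspace (subtopology T S). f y \<in> B} = U \<inter> S"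
    by (auto simp: openin_subtopology)
  then have "x \<in> U" using assms(3,4) \<open>f x \<in> B\<close> by auto
  have "eventually (\<lambda>d. d \<in> U \<inter> D) (approach x)"
    using U(1) \<open>x \<in> U\<close> by (rule eventually_approach_openin)
  then show "eventually (\<lambda>d. f d \<in> B) (approach x)"
    by eventually_elim (use U assms(2) in auto)
qed

lemma D_characters_uniform:
  assumes psi: "psi \<in> characters GD TD" and "e > 0"
  obtains V where "openin T V" "\<one> \<in> V"
    "\<And>d d'. d \<in> D \<Longrightarrow> d' \<in> D \<Longrightarrow> inv d \<otimes> d' \<in> V \<Longrightarrow> dist (psi d') (psi d) < e"
proof -
  obtain VD where VD: "openin TD VD" "\<one> \<in> VD" "\<And>v. v \<in> VD \<Longrightarrow> dist (psi v) 1 < e"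
    using D.characters_near_one[OF psi \<open>e > 0\<close>] by auto
  then obtain V where V: "openin T V" "VD = V \<inter> D" by (auto simp: openin_subtopology)
  show thesis
  proof (rule that[OF V(1)])
    show "\<one> \<in> V" using VD(2) V(2) by auto
    fix d d' assume d: "d \<in> D" "d' \<in> D" "inv d \<otimes> d' \<in> V"
    have "inv d \<otimes> d' \<in> D"
      using d subgroup by (simp add: subgroup.m_closed subgroup.m_inv_closed)
    then have "dist (psi (inv d \<otimes> d')) 1 < e" using VD(3) V(2) d(3) by blast
    moreover have "dist (psi d') (psi d) = dist (psi (inv d \<otimes> d')) 1"
      using D.hom_circle_group_dist[OF D.characters_hom[OF psi], of d d'] d subgroup by simp
    ultimately show "dist (psi d') (psi d) < e" by simp
  qed
qed

lemma eventually_approach_in_D: "eventually (\<lambda>d. d \<in> D) (approach x)"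
  by (simp add: approach_def eventually_inf_principal)

lemma D_characters_cauchy:
  assumes psi: "psi \<in> characters GD TD" and x: "x \<in> carrier G" and "e > 0"
  obtains U where "openin T U" "x \<in> U"
    "\<And>d d'. d \<in> U \<inter> D \<Longrightarrow> d' \<in> U \<inter> D \<Longrightarrow> dist (psi d) (psi d') < e"
proof -
  obtain V where V: "openin T V" "\<one> \<in> V"
    and close: "\<And>d d'. d \<in> D \<Longrightarrow> d' \<in> D \<Longrightarrow> inv d \<otimes> d' \<in> V \<Longrightarrow> dist (psi d') (psi d) < e"
    using D_characters_uniform[OF psi \<open>e > 0\<close>] by blast
  obtain W where W: "openin T W" "\<one> \<in> W" "\<And>a b. a \<in> W \<Longrightarrow> b \<in> W \<Longrightarrow> inv a \<otimes> b \<in> V"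
    by (rule nbhd_of_one_split[OF V]) blast
  show thesis
  proof (rule that)
    show "openin T {y \<in> carrier G. inv x \<otimes> y \<in> W}"
      using openin_left_mult_preimage[OF inv_closed[OF x] W(1)] .
    show "x \<in> {y \<in> carrier G. inv x \<otimes> y \<in> W}" using x W(2) by simp
    fix d d' assume d: "d \<in> {y \<in> carrier G. inv x \<otimes> y \<in> W} \<inter> D" "d' \<in> {y \<in> carrier G. inv x \<otimes> y \<in> W} \<inter> D"
    then have "inv (inv x \<otimes> d') \<otimes> (inv x \<otimes> d) \<in> V" using W(3) by blast
    then have "inv d' \<otimes> d \<in> V" using inv_mult_left_translates[of "inv x" d' d] x d by simp
    then show "dist (psi d) (psi d') < e" using close d by blast
  qed
qed

text \<open>A cluster point of \<open>psi\<close> along \<open>approach x\<close> exists by compactness of the circle; it is a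
  limit by the Cauchy property.\<close>
lemma D_characters_convergent:
  assumes psi: "psi \<in> characters GD TD" and x: "x \<in> carrier G"
  shows "\<exists>z. (psi \<longlongrightarrow> z) (approach x)"
proof -
  let ?F = "filtermap psi (approach x)"
  have "eventually (\<lambda>w. w \<in> sphere 0 1) ?F"
    unfolding eventually_filtermap using eventually_approach_in_D
    by eventually_elim (use D.hom_circle_group_in_sphere[OF D.characters_hom[OF psi]] in simp)
  moreover have "?F \<noteq> bot" using approach_ne_bot[OF x] by (simp add: filtermap_bot_iff)
  ultimately obtain z where z: "inf (nhds z) ?F \<noteq> bot"
    using compact_filter[THEN iffD1, rule_format, OF compact_sphere] by blast
  have "(psi \<longlongrightarrow> z) (approach x)"
  proof (rule tendstoI)
    fix e :: real assume "e > 0"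
    obtain U where U: "openin T U" "x \<in> U"
      and close: "\<And>d d'. d \<in> U \<inter> D \<Longrightarrow> d' \<in> U \<inter> D \<Longrightarrow> dist (psi d) (psi d') < e/2"
      using D_characters_cauchy[OF psi x half_gt_zero[OF \<open>e > 0\<close>]] by blast
    have U_ev: "eventually (\<lambda>d. d \<in> U \<inter> D) (approach x)" by (rule eventually_approach_openin[OF U])
    have "eventually (\<lambda>w. dist w z < e/2 \<and> (\<exists>d\<in>U \<inter> D. w = psi d)) (inf (nhds z) ?F)"
      unfolding eventually_inf
    proof (intro exI conjI allI impI)
      show "eventually (\<lambda>w. dist w z < e/2) (nhds z)"
        using tendstoD[OF filterlim_ident half_gt_zero[OF \<open>e > 0\<close>]] .
      show "eventually (\<lambda>w. \<exists>d\<in>U \<inter> D. w = psi d) ?F"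
        unfolding eventually_filtermap using U_ev by eventually_elim blast
    qed auto
    then obtain d' where d': "d' \<in> U \<inter> D" "dist (psi d') z < e/2"
      using eventually_happens'[OF z] by blast
    show "eventually (\<lambda>d. dist (psi d) z < e) (approach x)"
      using U_ev
    proof eventually_elim
      case (elim d)
      then have "dist (psi d) (psi d') < e/2" using close d'(1) by blast
      with d'(2) show ?case using dist_triangle[of "psi d" z "psi d'"] by linarith
    qed
  qed
  then show ?thesis by blast
qed

definition extend :: "('a \<Rightarrow> complex) \<Rightarrow> 'a \<Rightarrow> complex" where
  "extend psi = (\<lambda>x\<in>carrier G. Lim (approach x) psi)"

lemma tendsto_extend:
  assumes "psi \<in> characters GD TD" "x \<in> carrier G"
  shows "(psi \<longlongrightarrow> extend psi x) (approach x)"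
proof -
  obtain z where "(psi \<longlongrightarrow> z) (approach x)" using D_characters_convergent[OF assms] by blast
  moreover from this have "extend psi x = z"
    using assms(2) approach_ne_bot[OF assms(2)] by (simp add: extend_def tendsto_Lim)
  ultimately show ?thesis by simp
qed

lemma extend_eqI:
  assumes "psi \<in> characters GD TD" "x \<in> carrier G" "(psi \<longlongrightarrow> z) (approach x)"
  shows "extend psi x = z"
  using tendsto_unique[OF approach_ne_bot tendsto_extend] assms by blast

lemma extend_in_closed:
  assumes psi: "psi \<in> characters GD TD" and x: "x \<in> carrier G" and "closed S"
    and "eventually (\<lambda>d. psi d \<in> S) (approach x)"
  shows "extend psi x \<in> S"
  using Lim_in_closed_set[OF assms(3,4) approach_ne_bot[OF x] tendsto_extend[OF psi x]] .

lemma extend_in_sphere: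
  assumes psi: "psi \<in> characters GD TD" and x: "x \<in> carrier G"
  shows "extend psi x \<in> sphere 0 1"
proof (rule extend_in_closed[OF psi x])
  show "eventually (\<lambda>d. psi d \<in> sphere 0 1) (approach x)"
    using eventually_approach_in_D
  proof eventually_elim
    case (elim d)
    then show ?case using D.hom_circle_group_in_sphere[OF D.characters_hom[OF psi]] by simp
  qed
qed simp

lemma approach_mult:
  assumes x: "x \<in> carrier G" and y: "y \<in> carrier G"
  shows "filterlim (\<lambda>p. fst p \<otimes> snd p) (approach (x \<otimes> y)) (approach x \<times>\<^sub>F approach y)"
  unfolding filterlim_def le_filter_def eventually_filtermap
proof (intro allI impI)
  fix P assume "eventually P (approach (x \<otimes> y))"
  then obtain S where S: "openin T S" "x \<otimes> y \<in> S" "\<And>d. d \<in> S \<Longrightarrow> d \<in> D \<Longrightarrow> P d"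
    using x y by (auto simp: approach_def eventually_inf_principal eventually_nhdsin)
  obtain U1 U2 where U: "openin T U1" "openin T U2" "x \<in> U1" "y \<in> U2"
    "\<And>d1 d2. d1 \<in> U1 \<Longrightarrow> d2 \<in> U2 \<Longrightarrow> d1 \<otimes> d2 \<in> S"
    by (rule continuous_map_prod_nbhds[OF continuous_map_mult S(1)]) (use x y S(2) in auto)
  show "eventually (\<lambda>p. P (fst p \<otimes> snd p)) (approach x \<times>\<^sub>F approach y)"
    unfolding eventually_prod_filter
  proof (intro exI conjI allI impI)
    show "eventually (\<lambda>d. d \<in> U1 \<inter> D) (approach x)" by (rule eventually_approach_openin[OF U(1,3)])
    show "eventually (\<lambda>d. d \<in> U2 \<inter> D) (approach y)" by (rule eventually_approach_openin[OF U(2,4)])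
    fix d1 d2 assume "d1 \<in> U1 \<inter> D" "d2 \<in> U2 \<inter> D"
    then show "P (fst (d1, d2) \<otimes> snd (d1, d2))"
      using U(5) S(3) subgroup.m_closed[OF subgroup] by simp
  qed
qed

lemma extend_mult:
  assumes psi: "psi \<in> characters GD TD" and x: "x \<in> carrier G" and y: "y \<in> carrier G"
  shows "extend psi (x \<otimes> y) = extend psi x * extend psi y"
proof -
  let ?F = "approach x \<times>\<^sub>F approach y"
  have "((\<lambda>p. psi (fst p \<otimes> snd p)) \<longlongrightarrow> extend psi (x \<otimes> y)) ?F"
    using filterlim_compose[OF tendsto_extend[OF psi m_closed[OF x y]] approach_mult[OF x y]] .
  moreover have "((\<lambda>p. psi (fst p \<otimes> snd p)) \<longlongrightarrow> extend psi x * extend psi y) ?F"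
  proof (rule tendsto_cong[THEN iffD1])
    show "eventually (\<lambda>p. psi (fst p) * psi (snd p) = psi (fst p \<otimes> snd p)) ?F"
      unfolding eventually_prod_filter
      using eventually_approach_in_D D.hom_circle_group_mult[OF D.characters_hom[OF psi]]
      by (intro exI[of _ "\<lambda>d. d \<in> D"] conjI) auto
    show "((\<lambda>p. psi (fst p) * psi (snd p)) \<longlongrightarrow> extend psi x * extend psi y) ?F"
      by (intro tendsto_mult filterlim_compose[OF tendsto_extend[OF psi x] filterlim_fst]
          filterlim_compose[OF tendsto_extend[OF psi y] filterlim_snd])
  qed
  ultimately show ?thesis
    using approach_ne_bot x y by (intro tendsto_unique) (auto simp: prod_filter_eq_bot)
qed

lemma extend_in_characters:
  assumes psi: "psi \<in> characters GD TD"
  shows "extend psi \<in> characters G T"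
proof (rule charactersI)
  show "extend psi \<in> hom G circle_group"
    using extend_in_sphere[OF psi] extend_mult[OF psi] by (auto simp: hom_circle_group_iff)
  show "extend psi \<in> extensional (carrier G)" by (simp add: extend_def)
  fix e :: real assume "e > 0"
  obtain VD where VD: "openin TD VD" "\<one> \<in> VD" "\<And>v. v \<in> VD \<Longrightarrow> dist (psi v) 1 < e/2"
    using D.characters_near_one[OF psi half_gt_zero[OF \<open>e > 0\<close>]] by auto
  then obtain V where V: "openin T V" "VD = V \<inter> D" by (auto simp: openin_subtopology)
  have "dist (extend psi v) 1 < e" if v: "v \<in> V" for v
  proof -
    have "eventually (\<lambda>d. d \<in> V \<inter> D) (approach v)" by (rule eventually_approach_openin[OF V(1) v])
    then have "eventually (\<lambda>d. psi d \<in> cball 1 (e/2)) (approach v)"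
      by eventually_elim (use VD(3) V(2) in \<open>auto simp: dist_commute less_imp_le\<close>)
    then have "extend psi v \<in> cball 1 (e/2)"
      using v openin_subset[OF V(1)] by (intro extend_in_closed[OF psi]) auto
    then show ?thesis using \<open>e > 0\<close> by (simp add: dist_commute)
  qed
  then show "\<exists>V. openin T V \<and> \<one> \<in> V \<and> (\<forall>v\<in>V. dist (extend psi v) 1 < e)"
    using V VD(2) by blast
qed

lemma restrict_in_characters:
  assumes chi: "chi \<in> characters G T"
  shows "restrict chi D \<in> characters GD TD"
proof (rule D.charactersI)
  show "restrict chi D \<in> hom GD circle_group"
    using hom_circle_group_in_sphere[OF characters_hom[OF chi]]
      hom_circle_group_mult[OF characters_hom[OF chi]] subset_carrier subgroup.m_closed[OF subgroup]
    by (auto simp: D.hom_circle_group_iff)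
  fix e :: real assume "e > 0"
  then obtain V where "openin T V" "\<one> \<in> V" "\<And>v. v \<in> V \<Longrightarrow> dist (chi v) 1 < e"
    using characters_near_one[OF chi] by blast
  then show "\<exists>V. openin TD V \<and> \<one>\<^bsub>GD\<^esub> \<in> V \<and> (\<forall>v\<in>V. dist (restrict chi D v) 1 < e)"
    using subgroup.one_closed[OF subgroup] by (intro exI[of _ "V \<inter> D"]) (auto simp: openin_subtopology_Int)
qed simp

lemma extend_restrict:
  assumes chi: "chi \<in> characters G T"
  shows "extend (restrict chi D) = chi"
proof
  fix x show "extend (restrict chi D) x = chi x"
  proof (cases "x \<in> carrier G")
    case True
    have "continuous_map (subtopology T (carrier G)) euclidean chi"
      using characters_continuous[OF chi]
      by (simp add: continuous_map_circle_top_iff continuous_map_from_subtopology)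
    then have "(chi \<longlongrightarrow> chi x) (approach x)"
      using True subset_carrier by (intro tendsto_approach) auto
    moreover have "eventually (\<lambda>d. chi d = restrict chi D d) (approach x)"
      using eventually_approach_in_D by (rule eventually_mono) simp
    ultimately have "(restrict chi D \<longlongrightarrow> chi x) (approach x)"
      using tendsto_cong by blast
    then show ?thesis using extend_eqI[OF restrict_in_characters[OF chi] True] by simp
  next
    case False
    then show ?thesis using characters_extensional[OF chi] by (simp add: extend_def extensional_def)
  qed
qed

lemma restrict_extend:
  assumes psi: "psi \<in> characters GD TD"
  shows "restrict (extend psi) D = psi"
proof
  fix d show "restrict (extend psi) D d = psi d"
  proof (cases "d \<in> D")
    case True
    have "continuous_map TD euclidean psi"
      using D.characters_continuous[OF psi] by (simp add: continuous_map_circle_top_iff)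
    then have "(psi \<longlongrightarrow> psi d) (approach d)"
      using True subset_carrier by (intro tendsto_approach) auto
    then show ?thesis using extend_eqI[OF psi] True subset_carrier by auto
  next
    case False
    then show ?thesis using D.characters_extensional[OF psi] by (simp add: extensional_def)
  qed
qed

lemma bij_betw_restrict: "bij_betw (\<lambda>chi. restrict chi D) (characters G T) (characters GD TD)"
  by (rule bij_betw_byWitness[where f' = extend])
    (auto simp: extend_restrict restrict_extend restrict_in_characters extend_in_characters)

lemma restrict_hom: "(\<lambda>chi. restrict chi D) \<in> hom (dual_group G T) (dual_group GD TD)"
  unfolding hom_def
proof (intro CollectI conjI ballI)
  show "(\<lambda>chi. restrict chi D) \<in> carrier (dual_group G T) \<rightarrow> carrier (dual_group GD TD)"
    using restrict_in_characters by (auto simp: dual_group_def)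
  fix chi phi
  show "restrict (chi \<otimes>\<^bsub>dual_group G T\<^esub> phi) D =
      restrict chi D \<otimes>\<^bsub>dual_group GD TD\<^esub> restrict phi D"
    using subset_carrier by (auto simp: dual_group_def fun_eq_iff)
qed

lemma continuous_map_restrict: "continuous_map (dual_top G T) (dual_top GD TD) (\<lambda>chi. restrict chi D)"
proof (rule continuous_map_into_dual_top)
  show "(\<lambda>chi. restrict chi D) \<in> topspace (dual_top G T) \<rightarrow> characters GD TD"
    using restrict_in_characters by auto
  fix K U assume K: "compactin TD K" and U: "openin circle_top U"
  then have "K \<subseteq> D" "compactin T K" by (simp_all add: compactin_subtopology)
  then have "{chi \<in> topspace (dual_top G T). restrict chi D ` K \<subseteq> U} = {chi \<in> characters G T. chi ` K \<subseteq> U}"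
    by auto
  then show "openin (dual_top G T) {chi \<in> topspace (dual_top G T). restrict chi D ` K \<subseteq> U}"
    using openin_dual_top_basic[OF \<open>compactin T K\<close> U] by simp
qed

section \<open>Compact sets of characters and the canonical map\<close>

lemma equicontinuous_if_restrict_equicontinuous:
  assumes K: "K \<subseteq> characters G T" and equi: "D.equicontinuous ((\<lambda>chi. restrict chi D) ` K)"
  shows "equicontinuous K"
  unfolding equicontinuous_def
proof (intro allI impI)
  fix e :: real assume "e > 0"
  then obtain VD where VD: "openin TD VD" "\<one> \<in> VD"
      "\<forall>v\<in>VD. \<forall>psi\<in>(\<lambda>chi. restrict chi D) ` K. dist (psi v) 1 \<le> e"
    using equi unfolding D.equicontinuous_def by auto
  then obtain V where V: "openin T V" "VD = V \<inter> D" by (auto simp: openin_subtopology)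
  have "V \<subseteq> {x \<in> topspace T. chi x \<in> cball 1 e}" if chi: "chi \<in> K" for chi
  proof (rule dense_openin_Int_subset_closedin[OF dense V(1)])
    have "continuous_map T euclidean chi"
      using characters_continuous chi K by (auto simp: continuous_map_circle_top_iff)
    then show "closedin T {x \<in> topspace T. chi x \<in> cball 1 e}"
      by (rule closedin_continuous_map_preimage) simp
    show "V \<inter> D \<subseteq> {x \<in> topspace T. chi x \<in> cball 1 e}"
      using VD(3) V(2) chi subset_carrier by (force simp: dist_commute)
  qed
  then have "\<forall>v\<in>V. \<forall>chi\<in>K. dist (chi v) 1 \<le> e" by (force simp: dist_commute)
  then show "\<exists>V. openin T V \<and> \<one> \<in> V \<and> (\<forall>v\<in>V. \<forall>chi\<in>K. dist (chi v) 1 \<le> e)"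
    using V VD(2) by blast
qed

lemma compactin_covered_by_D_translates:
  assumes C: "compactin T C" and V: "openin T V" "\<one> \<in> V"
  obtains F where "finite F" "F \<subseteq> D" "\<And>c. c \<in> C \<Longrightarrow> \<exists>d\<in>F. inv d \<otimes> c \<in> V"
proof -
  obtain W where W: "openin T W" "\<one> \<in> W" "\<And>a b. a \<in> W \<Longrightarrow> b \<in> W \<Longrightarrow> inv a \<otimes> b \<in> V"
    by (rule nbhd_of_one_split[OF V]) blast
  define nbhd where "nbhd x = {y \<in> carrier G. inv x \<otimes> y \<in> W}" for x
  have C_carrier: "C \<subseteq> carrier G" using compactin_subset_topspace[OF C] by simp
  have "\<exists>\<F>. finite \<F> \<and> \<F> \<subseteq> nbhd ` C \<and> C \<subseteq> \<Union>\<F>"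
  proof (rule compactinD[OF C])
    show "openin T U" if "U \<in> nbhd ` C" for U
      using that C_carrier openin_left_mult_preimage[OF inv_closed W(1)] by (auto simp: nbhd_def)
    have "x \<in> nbhd x" if "x \<in> C" for x using that C_carrier W(2) by (auto simp: nbhd_def)
    then show "C \<subseteq> \<Union> (nbhd ` C)" by blast
  qed
  then obtain C0 where C0: "finite C0" "C0 \<subseteq> C" "C \<subseteq> \<Union> (nbhd ` C0)"
    by (metis finite_subset_image)
  have "\<exists>d\<in>D. inv x \<otimes> d \<in> W" if "x \<in> C0" for x
  proof -
    have "openin T (nbhd x)" "x \<in> nbhd x"
      using that C0(2) C_carrier openin_left_mult_preimage[OF inv_closed W(1)] W(2)
      by (auto simp: nbhd_def)
    then have "D \<inter> nbhd x \<noteq> {}" using dense unfolding dense_intersects_open by blast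
    then show ?thesis by (auto simp: nbhd_def)
  qed
  then obtain pick where pick: "\<And>x. x \<in> C0 \<Longrightarrow> pick x \<in> D \<and> inv x \<otimes> pick x \<in> W"
    by metis
  show thesis
  proof (rule that[of "pick ` C0"])
    show "finite (pick ` C0)" "pick ` C0 \<subseteq> D" using C0(1) pick by auto
    fix c assume "c \<in> C"
    then obtain x where x: "x \<in> C0" "c \<in> carrier G" "inv x \<otimes> c \<in> W"
      using C0(3) by (auto simp: nbhd_def)
    have "inv (inv x \<otimes> pick x) \<otimes> (inv x \<otimes> c) \<in> V" using W(3) pick[OF x(1)] x(3) by blast
    moreover have "x \<in> carrier G" "pick x \<in> carrier G"
      using x(1) C0(2) C_carrier pick[OF x(1)] subset_carrier by auto
    ultimately have "inv (pick x) \<otimes> c \<in> V"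
      using inv_mult_left_translates[of "inv x" "pick x" c] x(2) by simp
    then show "\<exists>d\<in>pick ` C0. inv d \<otimes> c \<in> V" using x(1) by blast
  qed
qed

lemma equicontinuous_close_on_compactin:
  assumes K: "K \<subseteq> characters G T" "equicontinuous K" and C: "compactin T C" and "e > 0"
  obtains F where "finite F" "F \<subseteq> D"
    "\<And>chi chi' c. chi \<in> K \<Longrightarrow> chi' \<in> K \<Longrightarrow> \<forall>d\<in>F. dist (chi d) (chi' d) < e \<Longrightarrow> c \<in> C \<Longrightarrow>
      dist (chi c) (chi' c) < 3 * e"
proof -
  obtain V where V: "openin T V" "\<one> \<in> V" "\<forall>v\<in>V. \<forall>chi\<in>K. dist (chi v) 1 \<le> e"
    using K(2) \<open>e > 0\<close> unfolding equicontinuous_def by blast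
  obtain F where F: "finite F" "F \<subseteq> D" "\<And>c. c \<in> C \<Longrightarrow> \<exists>d\<in>F. inv d \<otimes> c \<in> V"
    using compactin_covered_by_D_translates[OF C V(1,2)] by blast
  show thesis
  proof (rule that[OF F(1,2)])
    fix chi chi' c assume chi: "chi \<in> K" "chi' \<in> K" and close: "\<forall>d\<in>F. dist (chi d) (chi' d) < e"
      and "c \<in> C"
    then obtain d where d: "d \<in> F" "inv d \<otimes> c \<in> V" using F(3) by blast
    have hom: "chi \<in> hom G circle_group" "chi' \<in> hom G circle_group"
      using chi K(1) characters_hom by auto
    have "c \<in> carrier G" using compactin_subset_topspace[OF C] \<open>c \<in> C\<close> by auto
    moreover have "d \<in> carrier G" using d(1) F(2) subset_carrier by auto
    ultimately have u: "inv d \<otimes> c \<in> carrier G" by simp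
    let ?u = "inv d \<otimes> c"
    have "chi c = chi d * chi ?u" "chi' c = chi' d * chi' ?u"
      using hom_circle_group_shift[OF _ \<open>d \<in> carrier G\<close> \<open>c \<in> carrier G\<close>] hom by auto
    then have "dist (chi c) (chi' c) = norm (chi d * chi ?u - chi' d * chi' ?u)"
      by (simp only: dist_norm)
    also have "\<dots> \<le> dist (chi d) (chi' d) + dist (chi ?u) (chi' ?u)"
      unfolding dist_norm using hom_circle_group_in_sphere[OF hom(1) u]
        hom_circle_group_in_sphere[OF hom(2) \<open>d \<in> carrier G\<close>]
      by (intro norm_mult_diff_le) simp_all
    also have "\<dots> < e + (e + e)"
    proof (rule add_less_le_mono)
      show "dist (chi d) (chi' d) < e" using close d(1) by blast
      have "dist (chi ?u) 1 \<le> e" "dist (chi' ?u) 1 \<le> e" using V(3) d(2) chi by auto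
      then show "dist (chi ?u) (chi' ?u) \<le> e + e"
        using dist_triangle2[of "chi ?u" "chi' ?u" 1] by linarith
    qed
    finally show "dist (chi c) (chi' c) < 3 * e" by simp
  qed
qed

lemma continuous_map_extend_on_restrict_image:
  assumes K: "K \<subseteq> characters G T" "equicontinuous K"
  shows "continuous_map (subtopology (dual_top GD TD) ((\<lambda>chi. restrict chi D) ` K)) (dual_top G T) extend"
    (is "continuous_map ?X _ _")
proof (rule continuous_map_into_dual_top)
  show "extend \<in> topspace ?X \<rightarrow> characters G T"
    using K(1) restrict_in_characters extend_in_characters by auto
  fix C U assume C: "compactin T C" and U: "openin circle_top U"
  show "openin ?X {psi \<in> topspace ?X. extend psi ` C \<subseteq> U}"
  proof (subst openin_subopen, intro ballI)
    fix psi0 assume "psi0 \<in> {psi \<in> topspace ?X. extend psi ` C \<subseteq> U}"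
    then obtain chi0 where chi0: "chi0 \<in> K" "psi0 = restrict chi0 D" "chi0 ` C \<subseteq> U"
      using K(1) extend_restrict by auto
    have "compactin circle_top (chi0 ` C)"
      using image_compactin[OF C characters_continuous] chi0(1) K(1) by blast
    then obtain e where "e > 0"
      and e: "\<And>z w. z \<in> chi0 ` C \<Longrightarrow> w \<in> sphere 0 1 \<Longrightarrow> dist w z < e \<Longrightarrow> w \<in> U"
      using compactin_circle_top_uniform_nbhd U chi0(3) by metis
    obtain F where F: "finite F" "F \<subseteq> D"
      and close: "\<And>chi chi' c. chi \<in> K \<Longrightarrow> chi' \<in> K \<Longrightarrow> \<forall>d\<in>F. dist (chi d) (chi' d) < e/3 \<Longrightarrow>
        c \<in> C \<Longrightarrow> dist (chi c) (chi' c) < 3 * (e/3)"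
      using equicontinuous_close_on_compactin[OF K C, of "e/3"] \<open>e > 0\<close> by auto
    define N where "N = {psi \<in> characters GD TD. \<forall>d\<in>F. dist (psi d) (psi0 d) < e/3}"
    show "\<exists>W. openin ?X W \<and> psi0 \<in> W \<and> W \<subseteq> {psi \<in> topspace ?X. extend psi ` C \<subseteq> U}"
    proof (intro exI conjI subsetI)
      have "openin (dual_top GD TD) N"
        unfolding N_def using F subset_carrier by (intro openin_dual_top_finite_points) auto
      then show "openin ?X (N \<inter> (\<lambda>chi. restrict chi D) ` K)" by (rule openin_subtopology_Int)
      show "psi0 \<in> N \<inter> (\<lambda>chi. restrict chi D) ` K"
        using chi0 K(1) restrict_in_characters \<open>e > 0\<close> by (auto simp: N_def)
      fix psi assume psi: "psi \<in> N \<inter> (\<lambda>chi. restrict chi D) ` K"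
      then obtain chi where chi: "chi \<in> K" "psi = restrict chi D" by blast
      have "chi c \<in> U" if "c \<in> C" for c
      proof (rule e)
        show "chi0 c \<in> chi0 ` C" using that by blast
        show "chi c \<in> sphere 0 1"
          using that compactin_subset_topspace[OF C] chi(1) K(1)
            hom_circle_group_in_sphere[OF characters_hom] by auto
        have "\<forall>d\<in>F. dist (chi d) (chi0 d) < e/3"
        proof
          fix d assume "d \<in> F"
          then have "d \<in> D" using F(2) by blast
          then show "dist (chi d) (chi0 d) < e/3"
            using psi chi(2) chi0(2) \<open>d \<in> F\<close> by (auto simp: N_def)
        qed
        then show "dist (chi c) (chi0 c) < e" using close[OF chi(1) chi0(1) _ that] by simp
      qed
      then show "psi \<in> {psi \<in> topspace ?X. extend psi ` C \<subseteq> U}"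
        using psi chi K(1) extend_restrict restrict_in_characters by auto
    qed
  qed
qed

lemma compactin_if_restrict_compactin:
  assumes K: "K \<subseteq> characters G T" "equicontinuous K"
    and compact: "compactin (dual_top GD TD) ((\<lambda>chi. restrict chi D) ` K)"
  shows "compactin (dual_top G T) K"
proof -
  have "compactin (subtopology (dual_top GD TD) ((\<lambda>chi. restrict chi D) ` K)) ((\<lambda>chi. restrict chi D) ` K)"
    using compact by (simp add: compactin_subtopology)
  from image_compactin[OF this continuous_map_extend_on_restrict_image[OF K]]
  have "compactin (dual_top G T) ((\<lambda>chi. extend (restrict chi D)) ` K)" by (simp add: image_image)
  moreover have "(\<lambda>chi. extend (restrict chi D)) ` K = (\<lambda>chi. chi) ` K"
    using K(1) extend_restrict by (intro image_cong) auto
  ultimately show ?thesis by simp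
qed

lemma equicontinuous_if_restrict_compactin:
  assumes alpha_D: "continuous_map TD (bidual_top GD TD) (eval_map GD TD)"
    and K: "K \<subseteq> characters G T" "compactin (dual_top GD TD) ((\<lambda>chi. restrict chi D) ` K)"
  shows "equicontinuous K"
  using K(1) D.equicontinuous_if_compactin[OF alpha_D K(2)]
  by (rule equicontinuous_if_restrict_equicontinuous)

lemma compactin_dual_iff_restrict:
  assumes alpha_D: "continuous_map TD (bidual_top GD TD) (eval_map GD TD)"
    and K: "K \<subseteq> characters G T"
  shows "compactin (dual_top G T) K \<longleftrightarrow> compactin (dual_top GD TD) ((\<lambda>chi. restrict chi D) ` K)"
proof
  assume "compactin (dual_top G T) K"
  then show "compactin (dual_top GD TD) ((\<lambda>chi. restrict chi D) ` K)"
    by (rule image_compactin[OF _ continuous_map_restrict])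
next
  assume "compactin (dual_top GD TD) ((\<lambda>chi. restrict chi D) ` K)"
  then show "compactin (dual_top G T) K"
    using K equicontinuous_if_restrict_compactin[OF alpha_D K] by (intro compactin_if_restrict_compactin)
qed

lemma continuous_map_eval_map_if_dense:
  assumes alpha_D: "continuous_map TD (bidual_top GD TD) (eval_map GD TD)"
  shows "continuous_map T (bidual_top G T) (eval_map G T)"
proof (rule continuous_map_eval_map)
  fix K assume K: "compactin (dual_top G T) K"
  show "equicontinuous K"
  proof (rule equicontinuous_if_restrict_compactin[OF alpha_D])
    show "K \<subseteq> characters G T" using compactin_subset_topspace[OF K] by simp
    show "compactin (dual_top GD TD) ((\<lambda>chi. restrict chi D) ` K)"
      by (rule image_compactin[OF K continuous_map_restrict])
  qed
qed

section \<open>Local quasi-convexity\<close>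

lemma extend_image_subset_Lambda1:
  assumes psi: "psi \<in> characters GD TD" and V: "openin T V" "psi ` (V \<inter> D) \<subseteq> Lambda1"
  shows "extend psi ` V \<subseteq> Lambda1"
proof -
  have "V \<subseteq> {x \<in> topspace T. extend psi x \<in> Lambda1}"
  proof (rule dense_openin_Int_subset_closedin[OF dense V(1)])
    show "closedin T {x \<in> topspace T. extend psi x \<in> Lambda1}"
      using characters_continuous[OF extend_in_characters[OF psi]] closedin_Lambda1
      by (rule closedin_continuous_map_preimage)
    have "extend psi d = psi d" if "d \<in> D" for d
      using fun_cong[OF restrict_extend[OF psi], of d] that by simp
    then show "V \<inter> D \<subseteq> {x \<in> topspace T. extend psi x \<in> Lambda1}"
      using V(2) subset_carrier openin_subset[OF V(1)] by auto
  qed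
  then show ?thesis by auto
qed

lemma prepolar_polar_translate_in_D_prepolar:
  assumes V: "openin T V" "V \<inter> D \<subseteq> UD"
    and V1: "V1 \<subseteq> carrier G" "V1 \<subseteq> V" "\<And>v. v \<in> V1 \<Longrightarrow> v \<otimes> v \<in> V"
    and x: "x \<in> prepolar G T (polar G T V1)" and n: "n \<in> V1" and d: "x \<otimes> n \<in> D"
  shows "x \<otimes> n \<in> prepolar GD TD (polar GD TD UD)"
  unfolding prepolar_def
proof (intro CollectI conjI ballI)
  show "x \<otimes> n \<in> carrier GD" using d by simp
  fix psi assume "psi \<in> polar GD TD UD"
  then have psi: "psi \<in> characters GD TD" "psi ` (V \<inter> D) \<subseteq> Lambda1"
    using V(2) by (auto simp: polar_def)
  have "extend psi (x \<otimes> n) \<in> Lambda1"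
    using extend_in_characters[OF psi(1)] extend_image_subset_Lambda1[OF psi(1) V(1) psi(2)] V1 x n
    by (rule character_mult_prepolar_in_Lambda1)
  then show "psi (x \<otimes> n) \<in> Lambda1"
    using fun_cong[OF restrict_extend[OF psi(1)], of "x \<otimes> n"] d by simp
qed

lemma prepolar_polar_subset_nhd0:
  assumes lqc_D: "locally_quasi_convex GD TD" and W: "nhd0 G T W"
  shows "\<exists>U. nhd0 G T U \<and> prepolar G T (polar G T U) \<subseteq> W"
proof -
  obtain W0 where W0: "openin T W0" "\<one> \<in> W0" "W0 \<subseteq> W" using W by (auto simp: nhd0_def)
  obtain W1 where W1: "openin T W1" "\<one> \<in> W1" "\<And>a b. a \<in> W1 \<Longrightarrow> b \<in> W1 \<Longrightarrow> a \<otimes> b \<in> W0"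
    by (rule nbhd_of_one_split[OF W0(1,2)]) blast
  have "nhd0 GD TD (W1 \<inter> D)"
    unfolding nhd0_def using W1(1,2) subgroup.one_closed[OF subgroup] openin_subset[OF W1(1)]
    by (intro conjI exI[of _ "W1 \<inter> D"]) (auto simp: openin_subtopology_Int)
  then obtain UD where UD: "nhd0 GD TD UD" "prepolar GD TD (polar GD TD UD) \<subseteq> W1 \<inter> D"
    using lqc_D by (auto simp: locally_quasi_convex_def)
  then obtain V where V: "openin T V" "\<one> \<in> V" "V \<inter> D \<subseteq> UD"
    by (auto simp: nhd0_def openin_subtopology)
  obtain V1 where V1: "openin T V1" "\<one> \<in> V1" "V1 \<subseteq> V" "\<And>v. v \<in> V1 \<Longrightarrow> v \<otimes> v \<in> V"
    by (rule nbhd_of_one_split[OF V(1,2)]) blast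
  have V1_carrier: "V1 \<subseteq> carrier G" using openin_subset[OF V1(1)] by simp
  have "prepolar G T (polar G T V1) \<subseteq> W"
  proof
    fix x assume x: "x \<in> prepolar G T (polar G T V1)"
    then have x_carrier: "x \<in> carrier G" by (simp add: prepolar_def)
    define N where "N = {y \<in> carrier G. inv x \<otimes> y \<in> V1 \<inter> {z \<in> topspace T. inv z \<in> W1}}"
    have "openin T N"
      unfolding N_def using openin_continuous_map_preimage[OF continuous_map_inv W1(1)] V1(1)
      by (intro openin_left_mult_preimage[OF inv_closed[OF x_carrier]] openin_Int)
    moreover have "x \<in> N" using x_carrier V1(2) W1(2) by (simp add: N_def)
    ultimately obtain d where d: "d \<in> D" "d \<in> N"
      using dense unfolding dense_intersects_open by blast
    define n where "n = inv x \<otimes> d"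
    have n: "n \<in> V1" "inv n \<in> W1" using d(2) by (auto simp: N_def n_def)
    have "x \<otimes> n = d" using x_carrier d(2) by (simp add: n_def N_def m_assoc[symmetric])
    then have "d \<in> prepolar GD TD (polar GD TD UD)"
      using prepolar_polar_translate_in_D_prepolar[OF V(1,3) V1_carrier V1(3,4) x n(1)] d(1) by simp
    then have "d \<in> W1" using UD(2) by blast
    moreover have "d \<otimes> inv n = x"
      using x_carrier d(2) by (simp add: n_def N_def inv_mult_group m_assoc[symmetric])
    ultimately show "x \<in> W" using W1(3) n(2) W0(3) by force
  qed
  moreover have "nhd0 G T V1" using V1(1,2) V1_carrier by (auto simp: nhd0_def)
  ultimately show ?thesis by blast
qed

lemma locally_quasi_convex_if_dense:
  assumes "locally_quasi_convex GD TD"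
  shows "locally_quasi_convex G T"
  unfolding locally_quasi_convex_def
  using nhd0_prepolar_polar prepolar_polar_subset_nhd0[OF assms] by blast

end

theorem mainTheorem5:
  fixes G :: "'a monoid" and T :: "'a topology" and D :: "'a set"
  assumes "ab_top_group G T"
    and "subgroup D G"
    and "T closure_of D = topspace T"
  defines "GD \<equiv> G\<lparr>carrier := D\<rparr>" and "TD \<equiv> subtopology T D"
    and "r \<equiv> (\<lambda>ch. restrict ch D)"
  shows "(bij_betw r (characters G T) (characters GD TD)
          \<and> r \<in> hom (dual_group G T) (dual_group GD TD)
          \<and> continuous_map (dual_top G T) (dual_top GD TD) r)
       \<and> (continuous_map TD (bidual_top GD TD) (eval_map GD TD) \<longrightarrow>
           (\<forall>K. K \<subseteq> characters G T \<longrightarrow>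
                 (compactin (dual_top G T) K \<longleftrightarrow> compactin (dual_top GD TD) (r ` K)))
           \<and> continuous_map T (bidual_top G T) (eval_map G T))
       \<and> (locally_quasi_convex GD TD \<longrightarrow> locally_quasi_convex G T)"
proof -
  interpret dense_subgroup G T D
    using assms(1-3) by (simp add: dense_subgroup_def dense_subgroup_axioms_def top_comm_group_def)
  show ?thesis
    unfolding GD_def TD_def r_def
    using bij_betw_restrict restrict_hom continuous_map_restrict compactin_dual_iff_restrict
      continuous_map_eval_map_if_dense locally_quasi_convex_if_dense
    by blast
qed

end
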